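(* Let $N\ge 1$, let $q\in\mathbb C$, and let $S_N$ be the symmetric group with group algebra $\mathbb C[S_N]$, with composition convention $(\sigma_2\sigma_1)(i)=\sigma_2(\sigma_1(i))$. For a transposition $t=(A,A+1)$ of neighboring integers and $x\in\mathbb C$, let $w_{t,x}:\mathbb C[S_N]\to\mathbb C[S_N]$ be the linear operator given on $\sigma\in S_N$ by $$w_{t,x}(\sigma)=\begin{cases}(1-x)\sigma+x\,t\sigma, & \text{if } \sigma^{-1}(A)<\sigma^{-1}(A+1),\\ (1-qx)\sigma+qx\,t\sigma, & \text{if } \sigma^{-1}(A)>\sigma^{-1}(A+1).\end{cases}$$ For transpositions of neighboring integers $t_1,\dots,t_n$ and parameters $x_1,\dots,x_n\in\mathbb C$, define coefficients $f_n(s\to\pi)$, $s,\pi\in S_N$, by $$w_{t_n,x_n}w_{t_{n-1},x_{n-1}}\cdots w_{t_1,x_1}\, s=\sum_{\pi\in S_N} f_n(s\to\pi)\,\pi .$$ Let $T=(i,i+1)$ be a transposition of neighboring integers, let $s,\pi\in S_N$ be arbitrary with $s(i)<s(i+1)$, and let $t_1,\dots,t_n$, $x_1,\dots,x_n$ be arbitrary. Then $$f_n(sT\to\pi)=\begin{cases} f_n(s\to\pi T)+(1-q)f_n(s\to\pi), & \text{if } \pi(i)>\pi(i+1),\\ q\,f_n(s\to \pi T), & \text{if } \pi(i)<\pi(i+1).\end{cases}$$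
   Context: All objects are defined in the claim. Note that $sT$ and $\pi T$ denote compositions in $S_N$ (first apply $T$, then $s$ resp. $\pi$). *)

theory Defs
  imports "HOL-Combinatorics.Combinatorics" "HOL-Analysis.Analysis"
begin

text \<open>Elements of the group algebra
  C[S_N] are represented as coefficient functions on permutations; only coefficients at
  elements of S_N matter (sums range over S_N).\<close>

definition SN :: "nat \<Rightarrow> (nat \<Rightarrow> nat) set" where
  "SN N = {\<sigma>. \<sigma> permutes {1..N}}"

definition delta :: "(nat \<Rightarrow> nat) \<Rightarrow> (nat \<Rightarrow> nat) \<Rightarrow> complex" where
  "delta \<sigma> = (\<lambda>\<tau>. if \<tau> = \<sigma> then 1 else 0)"

definition wbasis :: "complex \<Rightarrow> nat \<Rightarrow> complex \<Rightarrow> (nat \<Rightarrow> nat) \<Rightarrow> (nat \<Rightarrow> nat) \<Rightarrow> complex" where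
  "wbasis q A x \<sigma> =
     (let t = Transposition.transpose A (A + 1) in
      if inv \<sigma> A < inv \<sigma> (A + 1)
      then (\<lambda>\<tau>. (1 - x) * delta \<sigma> \<tau> + x * delta (t \<circ> \<sigma>) \<tau>)
      else (\<lambda>\<tau>. (1 - q * x) * delta \<sigma> \<tau> + q * x * delta (t \<circ> \<sigma>) \<tau>))"

definition wop :: "complex \<Rightarrow> nat \<Rightarrow> nat \<Rightarrow> complex \<Rightarrow> ((nat \<Rightarrow> nat) \<Rightarrow> complex) \<Rightarrow> ((nat \<Rightarrow> nat) \<Rightarrow> complex)" where
  "wop q N A x v = (\<lambda>\<tau>. \<Sum>\<sigma>\<in>SN N. v \<sigma> * wbasis q A x \<sigma> \<tau>)"

text \<open>ts = [(A_1,x_1), ..., (A_n,x_n)], t_k = (A_k, A_k+1); w_{t_1,x_1} is applied first.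
  fcoef q N ts s \<pi> = f_n(s \<rightarrow> \<pi>).\<close>
definition fcoef :: "complex \<Rightarrow> nat \<Rightarrow> (nat \<times> complex) list \<Rightarrow> (nat \<Rightarrow> nat) \<Rightarrow> (nat \<Rightarrow> nat) \<Rightarrow> complex" where
  "fcoef q N ts s \<pi> = fold (\<lambda>(A, x) v. wop q N A x v) ts (delta s) \<pi>"

end

theory Submission
  imports Defs
begin

text \<open>Let R be the linear map on coefficient vectors v : S_N \<rightarrow> C with
  R v (\<pi>) = v(\<pi> T) + (1 - q) v(\<pi>) if \<pi> has a descent at i, and q v(\<pi> T) otherwise,
  i.e. right multiplication by the Hecke generator at the positions i, i+1. The claim says
  f_n(sT \<rightarrow> \<cdot>) = R f_n(s \<rightarrow> \<cdot>). Since s has an ascent at i, R maps the basis vector of s to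
  that of sT. Each w_{t,x} acts on the values A, A+1 instead (\<sigma> \<mapsto> t \<sigma>), and it commutes
  with R: if A, A+1 do not occupy the positions i, i+1 of \<tau>, then t does not affect the
  descent of \<tau> at i and T does not affect the order of A, A+1 in \<tau>; if they do, t \<tau> = \<tau> T
  and both sides are computed directly. Hence R commutes with the whole product of the w's.\<close>

abbreviation adj_transpose :: "nat \<Rightarrow> nat \<Rightarrow> nat" where
  "adj_transpose a \<equiv> Transposition.transpose a (a + 1)"

lemma transpose_comp_transpose_comp [simp]:
  "Transposition.transpose a b \<circ> (Transposition.transpose a b \<circ> f) = f"
  by (simp add: comp_assoc [symmetric])

lemma inv_doubleton_eq:
  assumes "inj f" "{f a, f b} = {c, d}"
  shows "{inv f c, inv f d} = {a, b}"
proof -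
  have "{inv f c, inv f d} = inv f ` {f a, f b}"
    using assms(2) by simp
  also have "\<dots> = {a, b}"
    using assms(1) by simp
  finally show ?thesis .
qed

lemma adj_transpose_less_iff:
  assumes "u \<noteq> w" "{u, w} \<noteq> {a, a + 1}"
  shows "adj_transpose a u < adj_transpose a w \<longleftrightarrow> u < w"
  using assms by (auto simp: Transposition.transpose_def doubleton_eq_iff)

lemma permutes_compose_left_iff:
  assumes "p permutes S"
  shows "p \<circ> \<tau> permutes S \<longleftrightarrow> \<tau> permutes S"
proof
  assume "p \<circ> \<tau> permutes S"
  then have "inv p \<circ> (p \<circ> \<tau>) permutes S"
    using permutes_inv [OF assms] by (rule permutes_compose)
  moreover have "inv p \<circ> (p \<circ> \<tau>) = \<tau>"
    using permutes_inv_o(2) [OF assms] by (simp add: comp_assoc [symmetric])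
  ultimately show "\<tau> permutes S"
    by simp
qed (rule permutes_compose [OF _ assms])

lemma permutes_compose_right_iff:
  assumes "p permutes S"
  shows "\<tau> \<circ> p permutes S \<longleftrightarrow> \<tau> permutes S"
proof
  assume "\<tau> \<circ> p permutes S"
  then have "\<tau> \<circ> p \<circ> inv p permutes S"
    using permutes_inv [OF assms] by (rule permutes_compose [rotated])
  moreover have "\<tau> \<circ> p \<circ> inv p = \<tau>"
    using permutes_inv_o(1) [OF assms] by (simp add: comp_assoc)
  ultimately show "\<tau> permutes S"
    by simp
qed (rule permutes_compose [OF assms])

lemma adj_transpose_permutes:
  assumes "1 \<le> a" "a + 1 \<le> N"
  shows "adj_transpose a permutes {1..N}"
  using assms by (intro permutes_swap_id) auto

lemma adj_transpose_comp_in_SN_iff: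
  assumes "1 \<le> a" "a + 1 \<le> N"
  shows "adj_transpose a \<circ> \<tau> \<in> SN N \<longleftrightarrow> \<tau> \<in> SN N"
  unfolding SN_def using permutes_compose_left_iff [OF adj_transpose_permutes [OF assms]] by simp

lemma comp_adj_transpose_in_SN_iff:
  assumes "1 \<le> a" "a + 1 \<le> N"
  shows "\<tau> \<circ> adj_transpose a \<in> SN N \<longleftrightarrow> \<tau> \<in> SN N"
  unfolding SN_def using permutes_compose_right_iff [OF adj_transpose_permutes [OF assms]] by simp

definition hop_rate :: "complex \<Rightarrow> nat \<Rightarrow> complex \<Rightarrow> (nat \<Rightarrow> nat) \<Rightarrow> complex" where
  "hop_rate q A x \<sigma> = (if inv \<sigma> A < inv \<sigma> (A + 1) then x else q * x)"

lemma wbasis_eq: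
  "wbasis q A x \<sigma> \<tau> =
     (1 - hop_rate q A x \<sigma>) * delta \<sigma> \<tau> + hop_rate q A x \<sigma> * delta (adj_transpose A \<circ> \<sigma>) \<tau>"
  by (simp add: wbasis_def hop_rate_def Let_def)

lemma wop_apply:
  assumes "1 \<le> A" "A + 1 \<le> N"
  shows "wop q N A x v \<tau> =
    (if \<tau> \<in> SN N then (1 - hop_rate q A x \<tau>) * v \<tau>
       + hop_rate q A x (adj_transpose A \<circ> \<tau>) * v (adj_transpose A \<circ> \<tau>) else 0)"
proof -
  let ?t = "adj_transpose A"
  have swap_eq: "\<tau> = ?t \<circ> \<sigma> \<longleftrightarrow> \<sigma> = ?t \<circ> \<tau>" for \<sigma>
    by (metis transpose_comp_transpose_comp)
  have "wop q N A x v \<tau> =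
      (\<Sum>\<sigma>\<in>SN N. if \<sigma> = \<tau> then (1 - hop_rate q A x \<sigma>) * v \<sigma> else 0)
    + (\<Sum>\<sigma>\<in>SN N. if \<sigma> = ?t \<circ> \<tau> then hop_rate q A x \<sigma> * v \<sigma> else 0)"
    unfolding wop_def wbasis_eq delta_def sum.distrib [symmetric]
    by (rule sum.cong [OF refl], simp only: swap_eq) (simp add: algebra_simps)
  then show ?thesis
    using adj_transpose_comp_in_SN_iff [OF assms]
    by (simp add: sum.delta' finite_permutations SN_def)
qed

lemma inv_adj_transpose_comp:
  assumes "bij \<tau>"
  shows "inv (adj_transpose A \<circ> \<tau>) A = inv \<tau> (A + 1)"
    and "inv (adj_transpose A \<circ> \<tau>) (A + 1) = inv \<tau> A"
  using assms by (simp_all add: o_inv_distrib)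

lemma hop_rate_comp_adj_transpose:
  assumes "bij \<tau>" "{inv \<tau> A, inv \<tau> (A + 1)} \<noteq> {i, i + 1}"
  shows "hop_rate q A x (\<tau> \<circ> adj_transpose i) = hop_rate q A x \<tau>"
proof -
  have "inv \<tau> A \<noteq> inv \<tau> (A + 1)"
    using assms(1) by (metis bij_inv_eq_iff n_not_Suc_n Suc_eq_plus1)
  then have "adj_transpose i (inv \<tau> A) < adj_transpose i (inv \<tau> (A + 1)) \<longleftrightarrow> inv \<tau> A < inv \<tau> (A + 1)"
    using assms(2) by (rule adj_transpose_less_iff)
  then show ?thesis
    using assms(1) by (simp add: hop_rate_def o_inv_distrib)
qed

lemma adj_transpose_comp_eq_comp_adj_transpose:
  fixes \<tau> :: "nat \<Rightarrow> nat"
  assumes "bij \<tau>" "{inv \<tau> A, inv \<tau> (A + 1)} = {i, i + 1}"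
  shows "adj_transpose A \<circ> \<tau> = \<tau> \<circ> adj_transpose i"
  using assms transpose_comp_eq [OF assms(1), of A "A + 1"]
  by (auto simp: doubleton_eq_iff transpose_commute)

lemma hop_rate_adj_transpose_comp:
  assumes "bij \<tau>"
  shows "hop_rate q A x (adj_transpose A \<circ> \<tau>) = (if inv \<tau> (A + 1) < inv \<tau> A then x else q * x)"
  unfolding hop_rate_def inv_adj_transpose_comp [OF assms] ..

lemma descent_adj_transpose_comp:
  fixes \<tau> :: "nat \<Rightarrow> nat"
  assumes "bij \<tau>" "{inv \<tau> A, inv \<tau> (A + 1)} \<noteq> {i, i + 1}"
  shows "(adj_transpose A \<circ> \<tau>) (i + 1) < (adj_transpose A \<circ> \<tau>) i \<longleftrightarrow> \<tau> (i + 1) < \<tau> i"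
proof -
  have "\<tau> (i + 1) \<noteq> \<tau> i"
    using bij_is_inj [OF assms(1)] by (simp add: inj_eq)
  moreover have "{\<tau> (i + 1), \<tau> i} \<noteq> {A, A + 1}"
    using assms(2) inv_doubleton_eq [OF bij_is_inj [OF assms(1)], of i "i + 1" A "A + 1"]
    by (auto simp: insert_commute)
  ultimately show ?thesis
    unfolding comp_apply by (rule adj_transpose_less_iff)
qed

definition hecke_right :: "complex \<Rightarrow> nat \<Rightarrow> ((nat \<Rightarrow> nat) \<Rightarrow> complex) \<Rightarrow> (nat \<Rightarrow> nat) \<Rightarrow> complex" where
  "hecke_right q i v = (\<lambda>\<pi>. if \<pi> (i + 1) < \<pi> i
      then v (\<pi> \<circ> adj_transpose i) + (1 - q) * v \<pi>
      else q * v (\<pi> \<circ> adj_transpose i))"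

lemma wop_hecke_right_apply:
  assumes "1 \<le> A" "A + 1 \<le> N" "\<tau> \<in> SN N"
  shows "wop q N A x (hecke_right q i v) \<tau> =
      (1 - hop_rate q A x \<tau>) *
        (if \<tau> (i + 1) < \<tau> i then v (\<tau> \<circ> adj_transpose i) + (1 - q) * v \<tau>
         else q * v (\<tau> \<circ> adj_transpose i))
    + hop_rate q A x (adj_transpose A \<circ> \<tau>) *
        (if (adj_transpose A \<circ> \<tau>) (i + 1) < (adj_transpose A \<circ> \<tau>) i
         then v (adj_transpose A \<circ> \<tau> \<circ> adj_transpose i) + (1 - q) * v (adj_transpose A \<circ> \<tau>)
         else q * v (adj_transpose A \<circ> \<tau> \<circ> adj_transpose i))"
  using assms by (simp add: wop_apply hecke_right_def)

lemma hecke_right_wop_apply: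
  assumes "1 \<le> A" "A + 1 \<le> N" "1 \<le> i" "i + 1 \<le> N" "\<tau> \<in> SN N"
  shows "hecke_right q i (wop q N A x v) \<tau> =
    (if \<tau> (i + 1) < \<tau> i
     then (1 - hop_rate q A x (\<tau> \<circ> adj_transpose i)) * v (\<tau> \<circ> adj_transpose i)
       + hop_rate q A x (adj_transpose A \<circ> \<tau> \<circ> adj_transpose i)
         * v (adj_transpose A \<circ> \<tau> \<circ> adj_transpose i)
       + (1 - q) * ((1 - hop_rate q A x \<tau>) * v \<tau>
           + hop_rate q A x (adj_transpose A \<circ> \<tau>) * v (adj_transpose A \<circ> \<tau>))
     else q * ((1 - hop_rate q A x (\<tau> \<circ> adj_transpose i)) * v (\<tau> \<circ> adj_transpose i)
       + hop_rate q A x (adj_transpose A \<circ> \<tau> \<circ> adj_transpose i)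
         * v (adj_transpose A \<circ> \<tau> \<circ> adj_transpose i)))"
proof -
  have "\<tau> \<circ> adj_transpose i \<in> SN N"
    using assms comp_adj_transpose_in_SN_iff by blast
  then show ?thesis
    using assms by (simp add: wop_apply hecke_right_def comp_assoc)
qed

lemma wop_hecke_right_commute_at_unaligned:
  assumes A: "1 \<le> A" "A + 1 \<le> N" and i: "1 \<le> i" "i + 1 \<le> N" and "\<tau> \<in> SN N"
    and unaligned: "{inv \<tau> A, inv \<tau> (A + 1)} \<noteq> {i, i + 1}"
  shows "wop q N A x (hecke_right q i v) \<tau> = hecke_right q i (wop q N A x v) \<tau>"
proof -
  let ?t = "adj_transpose A" and ?T = "adj_transpose i" and ?r = "hop_rate q A x"
  have "bij \<tau>"
    using \<open>\<tau> \<in> SN N\<close> by (simp add: SN_def permutes_bij)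
  then have "bij (?t \<circ> \<tau>)"
    by (simp add: bij_comp)
  moreover have "{inv (?t \<circ> \<tau>) A, inv (?t \<circ> \<tau>) (A + 1)} \<noteq> {i, i + 1}"
    using unaligned inv_adj_transpose_comp [OF \<open>bij \<tau>\<close>, of A] by (simp only:) (simp add: insert_commute)
  ultimately have rates: "?r (\<tau> \<circ> ?T) = ?r \<tau>" "?r (?t \<circ> \<tau> \<circ> ?T) = ?r (?t \<circ> \<tau>)"
    using hop_rate_comp_adj_transpose \<open>bij \<tau>\<close> unaligned by blast+
  show ?thesis
    unfolding wop_hecke_right_apply [OF A \<open>\<tau> \<in> SN N\<close>] hecke_right_wop_apply [OF A i \<open>\<tau> \<in> SN N\<close>]
      rates descent_adj_transpose_comp [OF \<open>bij \<tau>\<close> unaligned]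
    by (cases "\<tau> (i + 1) < \<tau> i") (simp_all add: algebra_simps)
qed

lemma wop_hecke_right_commute_at_aligned:
  assumes A: "1 \<le> A" "A + 1 \<le> N" and i: "1 \<le> i" "i + 1 \<le> N" and "\<tau> \<in> SN N"
    and aligned: "{inv \<tau> A, inv \<tau> (A + 1)} = {i, i + 1}"
  shows "wop q N A x (hecke_right q i v) \<tau> = hecke_right q i (wop q N A x v) \<tau>"
proof -
  let ?t = "adj_transpose A" and ?T = "adj_transpose i"
  have "bij \<tau>"
    using \<open>\<tau> \<in> SN N\<close> by (simp add: SN_def permutes_bij)
  have commute: "?t \<circ> \<tau> = \<tau> \<circ> ?T"
    using \<open>bij \<tau>\<close> aligned by (rule adj_transpose_comp_eq_comp_adj_transpose)
  then have round_trip: "?t \<circ> \<tau> \<circ> ?T = \<tau>"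
    by (simp add: comp_assoc)
  note expand = wop_hecke_right_apply [OF A \<open>\<tau> \<in> SN N\<close>] hecke_right_wop_apply [OF A i \<open>\<tau> \<in> SN N\<close>]
    round_trip commute [symmetric] hop_rate_adj_transpose_comp [OF \<open>bij \<tau>\<close>]
  from aligned consider "inv \<tau> A = i" "inv \<tau> (A + 1) = i + 1" | "inv \<tau> A = i + 1" "inv \<tau> (A + 1) = i"
    by (auto simp: doubleton_eq_iff)
  then show ?thesis
  proof cases
    case 1
    then have "\<tau> i = A" "\<tau> (i + 1) = A + 1"
      using \<open>bij \<tau>\<close> by (metis bij_inv_eq_iff)+
    with 1 show ?thesis
      unfolding expand by (simp add: hop_rate_def algebra_simps)
  next
    case 2
    then have "\<tau> i = A + 1" "\<tau> (i + 1) = A"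
      using \<open>bij \<tau>\<close> by (metis bij_inv_eq_iff)+
    with 2 show ?thesis
      unfolding expand by (simp add: hop_rate_def algebra_simps)
  qed
qed

lemma wop_hecke_right_commute:
  assumes A: "1 \<le> A" "A + 1 \<le> N" and i: "1 \<le> i" "i + 1 \<le> N"
  shows "wop q N A x (hecke_right q i v) = hecke_right q i (wop q N A x v)"
proof
  fix \<tau>
  show "wop q N A x (hecke_right q i v) \<tau> = hecke_right q i (wop q N A x v) \<tau>"
  proof (cases "\<tau> \<in> SN N")
    case False
    then show ?thesis
      using A comp_adj_transpose_in_SN_iff [OF i] by (simp add: wop_apply hecke_right_def)
  next
    case True
    then show ?thesis
      using wop_hecke_right_commute_at_aligned [OF A i] wop_hecke_right_commute_at_unaligned [OF A i]
      by blast
  qed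
qed

lemma hecke_right_delta:
  assumes "s i < s (i + 1)"
  shows "hecke_right q i (delta s) = delta (s \<circ> adj_transpose i)"
proof
  fix \<pi>
  have "\<pi> \<circ> adj_transpose i = s \<longleftrightarrow> \<pi> = s \<circ> adj_transpose i"
    by (auto simp: comp_assoc)
  then have shifted: "delta s (\<pi> \<circ> adj_transpose i) = delta (s \<circ> adj_transpose i) \<pi>"
    unfolding delta_def by presburger
  show "hecke_right q i (delta s) \<pi> = delta (s \<circ> adj_transpose i) \<pi>"
  proof (cases "\<pi> (i + 1) < \<pi> i")
    case True
    then have "\<pi> \<noteq> s"
      using assms by auto
    with True show ?thesis
      unfolding hecke_right_def shifted by (simp add: delta_def)
  next
    case False
    then have "\<pi> \<noteq> s \<circ> adj_transpose i"
      using assms by auto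
    with False show ?thesis
      unfolding hecke_right_def shifted by (simp add: delta_def)
  qed
qed

theorem proposition2p1:
  fixes N i :: nat and q :: complex and ts :: "(nat \<times> complex) list"
    and s \<pi> :: "nat \<Rightarrow> nat"
  assumes "N \<ge> 1"
    and "1 \<le> i" and "i + 1 \<le> N"
    and "\<forall>(A, x) \<in> set ts. 1 \<le> A \<and> A + 1 \<le> N"
    and "s permutes {1..N}" and "\<pi> permutes {1..N}"
    and "s i < s (i + 1)"
  shows "fcoef q N ts (s \<circ> Transposition.transpose i (i + 1)) \<pi> =
           (if \<pi> i > \<pi> (i + 1)
            then fcoef q N ts s (\<pi> \<circ> Transposition.transpose i (i + 1)) + (1 - q) * fcoef q N ts s \<pi>
            else q * fcoef q N ts s (\<pi> \<circ> Transposition.transpose i (i + 1)))"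
proof -
  let ?W = "\<lambda>(A, x). wop q N A x"
  have "hecke_right q i \<circ> ?W a = ?W a \<circ> hecke_right q i" if "a \<in> set ts" for a
    using assms(2-4) that wop_hecke_right_commute by fastforce
  then have "hecke_right q i (fold ?W ts (delta s)) = fold ?W ts (hecke_right q i (delta s))"
    by (rule fold_commute_apply)
  then have "fcoef q N ts (s \<circ> adj_transpose i) = hecke_right q i (fcoef q N ts s)"
    unfolding fcoef_def hecke_right_delta [OF assms(7)] by simp
  then show ?thesis
    by (simp add: hecke_right_def)
qed

end
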